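(* Let $A$ be a symmetric positive definite real $2\times 2$ matrix, $G=\begin{pmatrix}a&b\\ c&d\end{pmatrix}$ a real matrix, and $S=\begin{pmatrix}s_{11}& s_{12}\\ s_{12}& s_{22}\end{pmatrix}$ a fixed real symmetric matrix such that $SG+G^TS=2SAS$ and $\mathrm{trace}(G-AS)=0$ (so that $\tilde Gz=Sz+(G-AS)z$ is a SOHHD), let $\Phi(x,y)=\frac12(s_{11}x^2+2s_{12}xy+s_{22}y^2)$ and $\mu=e^{2\Phi(x,y)}dxdy$. For $z=(x,y)\in {\mathbb R}^2$ let $$ \mathbf{P}(z)= Gz+\mathbf{H}(z)= (ax+by,cx+dy)+\mathbf{H}(x,y), $$ where $$ \mathbf{H}(x,y)=(\alpha_{0,0}+\alpha_{2,0}x^{2}+\alpha_{2,1}xy+\alpha_{2,2}y^{2},\beta_{0,0}+\beta_{2,0}x^{2}+\beta_{2,1}xy+\beta_{2,2}y^{2}) $$ with real coefficients. Then: (i) The following are equivalent: the system \[ \begin{cases} s_{11}\alpha_{2,0}+s_{12}\beta_{2,0}=0, \\ s_{12}\alpha_{2,2}+s_{22}\beta_{2,2}=0, \\ s_{11}\alpha_{2,2}+s_{12}\alpha_{2,1}+s_{12}\beta_{2,2}+s_{22}\beta_{2,1} =0, \\ s_{11} \alpha_{2,1}+s_{12}\alpha_{2,0}+s_{12}\beta_{2,1}+s_{22}\beta_{2,0} =0, \\ s_{11}\alpha_{0,0}+s_{12}\beta_{0,0}+\alpha_{2,0}+\frac{\beta_{2,1}}{2}=0, \\ s_{12}\alpha_{0,0}+s_{22}\beta_{0,0}+\beta_{2,2}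 +\frac{\alpha_{2,1}}{2}=0 \end{cases} \] holds; $\mathrm{div}_{\mu}(\mathbf{H})=0$; $\langle \nabla \Phi, \mathbf{H} \rangle +\frac 12\mathrm{div} \mathbf{H}= 0$; $\mu$ is an infinitesimally invariant measure for $\big (\frac{1}{2} \mathrm{trace}(A\nabla^2) + \langle \mathbf{P}, \nabla \cdot \rangle, C_0^{\infty}({\mathbb R}^2)\big )$. Moreover, in any of these cases the decomposition \begin{eqnarray*} \tilde{\mathbf{P}}(z) :=Sz+\mathbf{P}(z)-ASz=\nabla \Phi(x,y)+(G-AS)\begin{pmatrix}x\\ y \end{pmatrix}+\mathbf{H}(x,y) \end{eqnarray*} is a SOHHD if and only if $\alpha_{2,0}=-\frac{\beta_{2,1}}{2}$ and $\beta_{2,2} =-\frac{\alpha_{2,1}}{2}$.\\ (ii) Suppose that $\mu$ is infinitesimally invariant for $(\frac{1}{2} \mathrm{trace}(A\nabla^2) + \langle \mathbf{P}, \nabla \cdot \rangle, C_0^{\infty}({\mathbb R}^2))$. Then $\mu$ is infinitesimally invariant for $(L, C_0^{\infty}({\mathbb R}^2))$, where $L$ is any of $\frac{1}{2} \mathrm{trace}(A\nabla^2) + \langle Gz, \nabla \cdot \rangle$, $\frac12\Delta+\langle Sz,\nabla\cdot\rangle$, $\frac12\Delta+\langle \tilde Gz,\nabla\cdot\rangle$, $\frac12\Delta+\langle \tilde{\mathbf P},\nabla\cdot\rangle$.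
   Context: $\mathrm{div}_\mu(\mathbf H)=0$ means $\int\langle\mathbf H,\nabla f\rangle\,d\mu=0$ for all $f\in C_0^\infty(\mathbb R^2)$. SOHHD of a continuous field: $\nabla\Phi+\mathbf B$ with $\Phi,\mathbf B\in C^1$, $\mathrm{div}\,\mathbf B=0$ and $\langle\nabla\Phi,\mathbf B\rangle=0$ everywhere. Infinitesimal invariance of $\widehat\mu$ for $(L,C_0^\infty)$: $\int Lf\,d\widehat\mu=0$ for all $f\in C_0^\infty$. *)

theory Defs
  imports "HOL-Analysis.Analysis"
begin

text \<open>Points of the plane are vectors z :: real^2 with x = z$1, y = z$2.
  2x2 matrices are real^2^2, acting by *v.\<close>

definition sym_mat :: "real^2^2 \<Rightarrow> bool" where
  "sym_mat M \<longleftrightarrow> transpose M = M"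

definition pos_def_mat :: "real^2^2 \<Rightarrow> bool" where
  "pos_def_mat M \<longleftrightarrow> (\<forall>v::real^2. v \<noteq> 0 \<longrightarrow> v \<bullet> (M *v v) > 0)"

definition pd :: "2 \<Rightarrow> (real^2 \<Rightarrow> real) \<Rightarrow> real^2 \<Rightarrow> real" where
  "pd i f z = frechet_derivative f (at z) (axis i 1)"

definition grad :: "(real^2 \<Rightarrow> real) \<Rightarrow> real^2 \<Rightarrow> real^2" where
  "grad f z = (\<chi> i. pd i f z)"

definition hess :: "(real^2 \<Rightarrow> real) \<Rightarrow> real^2 \<Rightarrow> real^2^2" where
  "hess f z = (\<chi> i j. pd j (pd i f) z)"

definition div_field :: "(real^2 \<Rightarrow> real^2) \<Rightarrow> real^2 \<Rightarrow> real" where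
  "div_field B z = (\<Sum>i\<in>UNIV. pd i (\<lambda>w. B w $ i) z)"

fun Ck :: "nat \<Rightarrow> (real^2 \<Rightarrow> real) \<Rightarrow> bool" where
  "Ck 0 f \<longleftrightarrow> continuous_on UNIV f"
| "Ck (Suc k) f \<longleftrightarrow> continuous_on UNIV f \<and> (\<forall>z. f differentiable at z) \<and> (\<forall>i. Ck k (pd i f))"

definition C0_inf :: "(real^2 \<Rightarrow> real) set" where
  "C0_inf = {f. (\<forall>k. Ck k f) \<and> compact (closure {z. f z \<noteq> 0})}"

definition Lop :: "real^2^2 \<Rightarrow> (real^2 \<Rightarrow> real^2) \<Rightarrow> (real^2 \<Rightarrow> real) \<Rightarrow> real^2 \<Rightarrow> real" where
  "Lop A P f z = 1/2 * trace (A ** hess f z) + P z \<bullet> grad f z"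

definition inf_invariant :: "(real^2) measure \<Rightarrow> ((real^2 \<Rightarrow> real) \<Rightarrow> real^2 \<Rightarrow> real) \<Rightarrow> bool" where
  "inf_invariant \<mu> L \<longleftrightarrow> (\<forall>f\<in>C0_inf. integral\<^sup>L \<mu> (L f) = 0)"

definition div_mu_zero :: "(real^2) measure \<Rightarrow> (real^2 \<Rightarrow> real^2) \<Rightarrow> bool" where
  "div_mu_zero \<mu> H \<longleftrightarrow> (\<forall>f\<in>C0_inf. integral\<^sup>L \<mu> (\<lambda>z. H z \<bullet> grad f z) = 0)"

definition C1_field :: "(real^2 \<Rightarrow> real^2) \<Rightarrow> bool" where
  "C1_field B \<longleftrightarrow> (\<forall>i. Ck 1 (\<lambda>z. B z $ i))"

text \<open>Strong orthogonal Helmholtz-Hodge decomposition \<nabla>\<Phi> + B.\<close>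
definition is_SOHHD :: "(real^2 \<Rightarrow> real) \<Rightarrow> (real^2 \<Rightarrow> real^2) \<Rightarrow> bool" where
  "is_SOHHD Phi B \<longleftrightarrow> Ck 1 Phi \<and> C1_field B \<and> (\<forall>z. div_field B z = 0)
      \<and> (\<forall>z. grad Phi z \<bullet> B z = 0)"

end

theory Submission
  imports Defs "HOL-Computational_Algebra.Polynomial"
begin

(* With rho = exp (2 Phi) one has grad rho = 2 rho grad Phi. Hence, for a symmetric A and
   U = W - A grad Phi, the function rho (1/2 trace (A D^2 f) + <W, grad f>) is the divergence of the
   compactly supported field rho A grad f / 2 + rho f U minus f rho (div U + 2 <grad Phi, U>).
   Integrating, mu = rho dz is infinitesimally invariant for 1/2 trace (A D^2) + <W, grad> iff the
   continuous function div U + 2 <grad Phi, U> vanishes identically (test against smooth bumps).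
   For the drifts of the theorem U is (G - A S) z plus H or 0. The linear part contributes nothing,
   since trace (G - A S) = 0 and <S z, (G - A S) z> = 0 by S G + G^T S = 2 S A S; for H the function
   is an odd cubic polynomial in (x, y) whose six coefficients are the six equations of the system. *)

section \<open>Partial derivatives and \<open>C\<^sup>1\<close> functions\<close>

lemma pd_eq_derivative: "(f has_derivative f') (at z) \<Longrightarrow> pd i f z = f' (axis i 1)"
  unfolding pd_def using frechet_derivative_at by metis

lemma vec_nth_has_derivative [derivative_intros]:
  "((\<lambda>z::real^2. z$i) has_derivative (\<lambda>h. h$i)) (at z)"
  by (simp add: bounded_linear_imp_has_derivative bounded_linear_vec_nth)

lemma axis_2_nth [simp]:
  "axis (1::2) (1::real) $ 1 = 1" "axis (1::2) (1::real) $ 2 = 0"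
  "axis (2::2) (1::real) $ 1 = 0" "axis (2::2) (1::real) $ 2 = 1"
  by (simp_all add: axis_def)

lemma sym_mat_nth_21:
  assumes "sym_mat M"
  shows "M$2$1 = M$1$2"
proof -
  have "transpose M $ 1 $ 2 = M $ 1 $ 2"
    using assms by (simp add: sym_mat_def)
  then show ?thesis
    by (simp add: transpose_def)
qed

lemma sym_mat_0 [simp]: "sym_mat 0"
  and sym_mat_1 [simp]: "sym_mat (mat 1)"
  by (simp_all add: sym_mat_def transpose_def vec_eq_iff mat_def)

lemma pd_const [simp]: "pd i (\<lambda>z. c) z = 0"
  by (simp add: pd_def)

lemma pd_add:
  "f differentiable at z \<Longrightarrow> g differentiable at z \<Longrightarrow> pd i (\<lambda>z. f z + g z) z = pd i f z + pd i g z"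
  by (subst pd_eq_derivative[OF has_derivative_add[OF frechet_derivative_works[THEN iffD1]
        frechet_derivative_works[THEN iffD1]]]) (auto simp: pd_def)

lemma pd_mult:
  "f differentiable at z \<Longrightarrow> g differentiable at z \<Longrightarrow>
    pd i (\<lambda>z. f z * g z :: real) z = pd i f z * g z + f z * pd i g z"
  by (subst pd_eq_derivative[OF has_derivative_mult[OF frechet_derivative_works[THEN iffD1]
        frechet_derivative_works[THEN iffD1]]]) (auto simp: pd_def)

lemma pd_eq_0_outside:
  assumes "closed K" "\<And>z. z \<notin> K \<Longrightarrow> g z = 0" "z \<notin> K"
  shows "pd i g z = 0"
proof -
  have "(g has_derivative (\<lambda>_. 0)) (at z)"
    by (rule has_derivative_transform_within_open[where s="- K", OF has_derivative_const])
      (use assms in auto)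
  then show ?thesis by (simp add: pd_eq_derivative)
qed

lemma pd_eq_0_outside_ball:
  "(\<And>z. norm z > R \<Longrightarrow> g z = 0) \<Longrightarrow> norm z > R \<Longrightarrow> pd i g z = 0"
  by (rule pd_eq_0_outside[where K="cball 0 R"]) auto

lemma Ck1_const: "Ck 1 (\<lambda>z. c)"
  by simp

lemma Ck1_add: "Ck 1 f \<Longrightarrow> Ck 1 g \<Longrightarrow> Ck 1 (\<lambda>z. f z + g z)"
  by (auto simp: pd_add intro!: continuous_intros)

lemma Ck1_mult: "Ck 1 f \<Longrightarrow> Ck 1 g \<Longrightarrow> Ck 1 (\<lambda>z. f z * g z)"
  by (auto simp: pd_mult intro!: continuous_intros)

lemma Ck1_has_gradientI:
  assumes deriv: "\<And>z. (f has_derivative (\<lambda>h. D z \<bullet> h)) (at z)" and cont: "continuous_on UNIV D"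
  shows "Ck 1 f" and "pd i f z = D z $ i"
proof -
  have pd: "pd i f = (\<lambda>z. D z $ i)" for i
    using pd_eq_derivative[OF deriv] by (simp add: fun_eq_iff inner_axis)
  then show "pd i f z = D z $ i"
    by simp
  have "continuous_on UNIV f"
    using deriv by (meson differentiableI differentiable_at_imp_differentiable_on
        differentiable_imp_continuous_on)
  then show "Ck 1 f"
    using deriv by (auto simp: pd differentiable_def intro!: continuous_on_component cont)
qed

lemma has_real_derivative_along_axis:
  fixes g :: "real^2 \<Rightarrow> real"
  assumes "\<And>z. g differentiable at z"
  shows "((\<lambda>t. g (z + t *\<^sub>R axis i 1)) has_real_derivative pd i g (z + t *\<^sub>R axis i 1)) (at t)"
proof -
  let ?D = "frechet_derivative g (at (z + t *\<^sub>R axis i 1))"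
  have "(g has_derivative ?D) (at (z + t *\<^sub>R axis i 1))"
    using assms frechet_derivative_works by blast
  moreover have "((\<lambda>t. z + t *\<^sub>R axis i 1) has_derivative (\<lambda>s. s *\<^sub>R axis i 1)) (at t)"
    by (auto intro!: derivative_eq_intros)
  ultimately have "((\<lambda>t. g (z + t *\<^sub>R axis i 1)) has_derivative (\<lambda>s. ?D (s *\<^sub>R axis i 1))) (at t)"
    using diff_chain_at by (fastforce simp: o_def)
  moreover have "(\<lambda>s. ?D (s *\<^sub>R axis i 1)) = (\<lambda>s. pd i g (z + t *\<^sub>R axis i 1) * s)"
    using linear_scale[OF linear_frechet_derivative[OF assms]] by (auto simp: pd_def fun_eq_iff)
  ultimately show ?thesis by (simp add: has_field_derivative_def)
qed

section \<open>Integrals of derivatives of compactly supported functions\<close>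

lemma integrable_vanishing_outside_ball:
  fixes F :: "'a::euclidean_space \<Rightarrow> real"
  assumes "continuous_on UNIV F" and "\<And>z. norm z > R \<Longrightarrow> F z = 0"
  shows "integrable lborel F"
proof -
  have "integrable lborel (\<lambda>x. indicator (cball 0 R) x *\<^sub>R F x)"
    by (rule borel_integrable_compact) (auto intro: continuous_on_subset[OF assms(1)])
  moreover have "(\<lambda>x. indicator (cball 0 R) x *\<^sub>R F x) = F"
    using assms(2) by (auto simp: fun_eq_iff indicator_def not_le)
  ultimately show ?thesis by simp
qed

lemma integral_lborel_translate:
  fixes g :: "'a::euclidean_space \<Rightarrow> real"
  assumes "g \<in> borel_measurable borel"
  shows "integral\<^sup>L lborel (\<lambda>z. g (z + a)) = integral\<^sup>L lborel g"
proof -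
  have "integral\<^sup>L lborel (\<lambda>z. g (z + a)) = integral\<^sup>L (distr lborel borel ((+) a)) g"
    using assms by (subst integral_distr) (auto simp: add.commute)
  also have "\<dots> = integral\<^sup>L lborel g"
    by (simp add: lborel_distr_plus)
  finally show ?thesis .
qed

lemma difference_quotient_tendsto_pd:
  fixes g :: "real^2 \<Rightarrow> real"
  assumes "\<And>z. g differentiable at z"
  shows "((\<lambda>t. (g (z + t *\<^sub>R axis i 1) - g z) / t) \<longlongrightarrow> pd i g z) (at 0)"
  using has_real_derivative_along_axis[OF assms, of z i 0] by (simp add: has_field_derivative_iff)

lemma difference_quotient_bounded:
  fixes g :: "real^2 \<Rightarrow> real"
  assumes "\<And>z. g differentiable at z" and "\<And>w. \<bar>pd i g w\<bar> \<le> M" and "h > 0"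
  shows "\<bar>(g (z + h *\<^sub>R axis i 1) - g z) / h\<bar> \<le> M"
proof -
  obtain t where "g (z + h *\<^sub>R axis i 1) - g (z + 0 *\<^sub>R axis i 1) = (h - 0) * pd i g (z + t *\<^sub>R axis i 1)"
    using MVT2[of 0 h "\<lambda>t. g (z + t *\<^sub>R axis i 1)" "\<lambda>t. pd i g (z + t *\<^sub>R axis i 1)"]
      has_real_derivative_along_axis[OF assms(1)] \<open>h > 0\<close> by blast
  then show ?thesis
    using assms(2,3) by simp
qed

lemma bounded_if_vanishing_outside_ball:
  fixes F :: "'a::euclidean_space \<Rightarrow> real"
  assumes "continuous_on UNIV F" and "\<And>z. norm z > R \<Longrightarrow> F z = 0"
  obtains M where "\<And>z. \<bar>F z\<bar> \<le> M"
proof -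
  have "compact (F ` cball 0 R)"
    by (rule compact_continuous_image) (auto intro: continuous_on_subset[OF assms(1)])
  then obtain M where "M > 0" "\<And>z. z \<in> cball 0 R \<Longrightarrow> \<bar>F z\<bar> \<le> M"
    using compact_imp_bounded bounded_pos by (metis image_eqI real_norm_def)
  then show ?thesis
    using that assms(2) by (metis abs_zero less_le_not_le mem_cball_0 not_le)
qed

lemma integral_difference_quotient_eq_0:
  fixes g :: "'a::euclidean_space \<Rightarrow> real"
  assumes cont: "continuous_on UNIV g" and vanish: "\<And>z. norm z > R \<Longrightarrow> g z = 0"
  shows "integral\<^sup>L lborel (\<lambda>z. (g (z + e) - g z) / h) = 0"
proof -
  have "integrable lborel (\<lambda>z. g (z + e))"
  proof (rule integrable_vanishing_outside_ball[of _ "R + norm e"])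
    show "continuous_on UNIV (\<lambda>z. g (z + e))"
      by (intro continuous_intros continuous_on_compose2[OF cont]) auto
    show "g (z + e) = 0" if "norm z > R + norm e" for z
      using that norm_triangle_ineq2[of z "- e"] by (intro vanish) simp
  qed
  moreover have "integrable lborel g"
    by (rule integrable_vanishing_outside_ball[OF cont vanish])
  moreover have "integral\<^sup>L lborel (\<lambda>z. g (z + e)) = integral\<^sup>L lborel g"
    by (rule integral_lborel_translate) (intro borel_measurable_continuous_onI cont)
  ultimately show ?thesis
    by simp
qed

text \<open>The integral of a partial derivative is the limit of the integrals of difference quotients,
  which vanish by translation invariance of Lebesgue measure.\<close>

lemma integral_pd_eq_0:
  fixes g :: "real^2 \<Rightarrow> real"
  assumes "Ck 1 g" and vanish: "\<And>z. norm z > R \<Longrightarrow> g z = 0"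
  shows "integral\<^sup>L lborel (pd i g) = 0"
proof -
  define e :: "real^2" where "e = axis i 1"
  have dg: "\<And>z. g differentiable at z" and contg: "continuous_on UNIV g"
    and cont: "continuous_on UNIV (pd i g)"
    using assms(1) by simp_all
  have "pd i g z = 0" if "norm z > R" for z
    using pd_eq_0_outside_ball[of R g] vanish that by blast
  then obtain M where bound_pd: "\<And>z. \<bar>pd i g z\<bar> \<le> M"
    using bounded_if_vanishing_outside_ball[OF cont] by blast
  define h :: "nat \<Rightarrow> real" where "h n = 1 / Suc n" for n
  have h: "h n > 0" "h n \<le> 1" for n by (auto simp: h_def)
  define s where "s n z = (g (z + h n *\<^sub>R e) - g z) / h n" for n z
  have vanish_shifted: "g (z + h n *\<^sub>R e) = 0" if "norm z > R + 1" for n z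
  proof (rule vanish)
    have "norm z - h n \<le> norm (z + h n *\<^sub>R e)"
      using norm_triangle_ineq2[of z "- (h n *\<^sub>R e)"] h[of n] by (simp add: e_def)
    then show "norm (z + h n *\<^sub>R e) > R" using that h[of n] by linarith
  qed
  have cont_shifted: "continuous_on UNIV (\<lambda>z. g (z + h n *\<^sub>R e))" for n
    by (intro continuous_intros continuous_on_compose2[OF contg]) auto
  have conts: "continuous_on UNIV (s n)" for n
    unfolding s_def[abs_def] using h[of n] by (intro continuous_intros cont_shifted contg) auto
  have "integral\<^sup>L lborel (s n) = 0" for n
    unfolding s_def by (rule integral_difference_quotient_eq_0[OF contg vanish])
  moreover have "(\<lambda>n. integral\<^sup>L lborel (s n)) \<longlonglongrightarrow> integral\<^sup>L lborel (pd i g)"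
  proof (rule integral_dominated_convergence[where w="\<lambda>z. indicator (cball 0 (R + 1)) z *\<^sub>R M"])
    show "integrable lborel (\<lambda>z. indicator (cball 0 (R + 1)) z *\<^sub>R M)"
      by (rule borel_integrable_compact) auto
    show "AE z in lborel. norm (s n z) \<le> indicator (cball 0 (R + 1)) z *\<^sub>R M" for n
      using vanish_shifted vanish difference_quotient_bounded[OF dg bound_pd h(1)]
      by (auto simp: s_def e_def indicator_def not_le)
    have "filterlim h (at 0) sequentially"
    proof (rule tendsto_imp_filterlim_at_right[THEN filterlim_mono])
      show "h \<longlonglongrightarrow> 0"
        unfolding h_def using LIMSEQ_Suc[OF lim_inverse_n'] by (simp add: o_def)
    qed (simp_all add: h at_within_le_at)
    then show "AE z in lborel. (\<lambda>n. s n z) \<longlonglongrightarrow> pd i g z"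
      unfolding s_def e_def by (auto intro: filterlim_compose[OF difference_quotient_tendsto_pd[OF dg]])
  qed (use cont conts in \<open>auto intro: borel_measurable_continuous_onI\<close>)
  ultimately show ?thesis
    using LIMSEQ_unique[OF _ tendsto_const] by simp
qed

lemma integral_div_field_eq_0:
  assumes "C1_field V" and vanish: "\<And>z. norm z > R \<Longrightarrow> V z = 0"
  shows "integrable lborel (div_field V)" and "integral\<^sup>L lborel (div_field V) = 0"
proof -
  have C1: "Ck 1 (\<lambda>z. V z $ i)" for i
    using assms(1) by (simp add: C1_field_def)
  have vanish_i: "norm z > R \<Longrightarrow> V z $ i = 0" for z i
    using vanish by simp
  have int: "integrable lborel (pd i (\<lambda>z. V z $ i))" for i
    using C1[of i] pd_eq_0_outside_ball[OF vanish_i]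
    by (intro integrable_vanishing_outside_ball[of _ R]) auto
  then show "integrable lborel (div_field V)"
    unfolding div_field_def[abs_def] by simp
  show "integral\<^sup>L lborel (div_field V) = 0"
    unfolding div_field_def[abs_def] using int integral_pd_eq_0[OF C1 vanish_i] by simp
qed

section \<open>Weighted integration by parts\<close>

text \<open>\<open>weighted_div Phi U = exp (-2 Phi) * div (exp (2 Phi) U)\<close>, the divergence of \<open>U\<close> with respect
  to the measure with density \<open>exp (2 Phi)\<close>.\<close>

definition weighted_div :: "(real^2 \<Rightarrow> real) \<Rightarrow> (real^2 \<Rightarrow> real^2) \<Rightarrow> real^2 \<Rightarrow> real" where
  "weighted_div Phi U z = div_field U z + 2 * (grad Phi z \<bullet> U z)"

lemma continuous_on_grad: "Ck 1 Phi \<Longrightarrow> continuous_on UNIV (grad Phi)"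
  unfolding grad_def[abs_def] by (auto intro!: continuous_on_vec_lambda)

lemma continuous_on_div_field: "C1_field V \<Longrightarrow> continuous_on UNIV (div_field V)"
  unfolding div_field_def[abs_def] C1_field_def by (auto intro!: continuous_intros)

lemma continuous_on_C1_field: "C1_field V \<Longrightarrow> continuous_on UNIV V"
  using continuous_on_vec_lambda[of UNIV "\<lambda>i z. V z $ i"]
  by (simp add: C1_field_def vec_lambda_eta)

lemma continuous_on_weighted_div:
  "Ck 1 Phi \<Longrightarrow> C1_field V \<Longrightarrow> continuous_on UNIV (weighted_div Phi V)"
  unfolding weighted_div_def[abs_def]
  by (intro continuous_intros continuous_on_div_field continuous_on_grad continuous_on_C1_field)

lemma Ck1_exp_weight:
  assumes "Ck 1 Phi"
  shows "Ck 1 (\<lambda>z. exp (2 * Phi z))"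
    and "pd i (\<lambda>z. exp (2 * Phi z)) z = 2 * pd i Phi z * exp (2 * Phi z)"
proof -
  have deriv: "((\<lambda>z. exp (2 * Phi z)) has_derivative
      (\<lambda>h. 2 * frechet_derivative Phi (at z) h * exp (2 * Phi z))) (at z)" for z
    using assms by (auto intro!: derivative_eq_intros simp: frechet_derivative_works)
  then have pd: "pd i (\<lambda>z. exp (2 * Phi z)) = (\<lambda>z. 2 * pd i Phi z * exp (2 * Phi z))" for i
    by (simp add: fun_eq_iff pd_eq_derivative[OF deriv]) (simp add: pd_def)
  then show "pd i (\<lambda>z. exp (2 * Phi z)) z = 2 * pd i Phi z * exp (2 * Phi z)"
    by simp
  show "Ck 1 (\<lambda>z. exp (2 * Phi z))"
    using assms deriv by (auto simp: pd differentiable_def intro!: continuous_intros)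
qed

lemma C0_inf_Ck1:
  assumes "f \<in> C0_inf"
  shows "Ck 1 f" and "Ck 1 (pd i f)"
proof -
  have "Ck (Suc (Suc 0)) f"
    using assms by (simp add: C0_inf_def)
  then show "Ck 1 f" "Ck 1 (pd i f)"
    by auto
qed

lemma C0_inf_vanishes_outside_ball:
  assumes "f \<in> C0_inf"
  obtains R where "\<And>z. norm z > R \<Longrightarrow> f z = 0"
proof -
  have "bounded {z. f z \<noteq> 0}"
    using assms compact_closure by (auto simp: C0_inf_def)
  then obtain R where "\<And>z. f z \<noteq> 0 \<Longrightarrow> norm z \<le> R"
    by (auto simp: bounded_iff)
  then show ?thesis
    using that by (meson not_le)
qed

text \<open>Since \<open>\<nabla>(exp (2 Phi)) = 2 exp (2 Phi) \<nabla>Phi\<close> and \<open>A\<close> is symmetric, the part \<open>A \<nabla>Phi\<close> of the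
  drift is absorbed into the divergence of \<open>exp (2 Phi) A \<nabla>f / 2\<close>.\<close>

lemma Lop_exp_weight_divergence_form:
  fixes A :: "real^2^2" and U W :: "real^2 \<Rightarrow> real^2"
  assumes A: "sym_mat A" and Phi: "Ck 1 Phi" and U: "C1_field U"
    and W: "\<And>z. W z = U z + A *v grad Phi z" and f: "Ck 1 f" "\<And>i. Ck 1 (pd i f)"
  shows "exp (2 * Phi z) * Lop A W f z =
    div_field (\<lambda>z. (exp (2 * Phi z) / 2) *\<^sub>R (A *v grad f z) + (exp (2 * Phi z) * f z) *\<^sub>R U z) z
      - f z * exp (2 * Phi z) * weighted_div Phi U z"
proof -
  define \<rho> where "\<rho> z = exp (2 * Phi z)" for z
  have \<rho>: "Ck 1 \<rho>" "\<And>i z. pd i \<rho> z = 2 * pd i Phi z * \<rho> z"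
    using Ck1_exp_weight[OF Phi] unfolding \<rho>_def[abs_def] by auto
  have diff: "\<rho> differentiable at z" "f differentiable at z" "pd i f differentiable at z"
    "(\<lambda>z. U z $ i) differentiable at z" for i z
    using \<rho> f U by (simp_all add: C1_field_def)
  have A21: "A$2$1 = A$1$2"
    using A by (rule sym_mat_nth_21)
  have "div_field (\<lambda>z. (\<rho> z / 2) *\<^sub>R (A *v grad f z) + (\<rho> z * f z) *\<^sub>R U z) z =
      (\<Sum>i\<in>UNIV. pd i (\<lambda>z. 1/2 * \<rho> z * (A$i$1 * pd 1 f z + A$i$2 * pd 2 f z) + \<rho> z * f z * U z $ i) z)"
    by (simp add: div_field_def matrix_vector_mult_def grad_def sum_2)
  also have "\<dots> = (\<Sum>i\<in>UNIV. 1/2 * (pd i \<rho> z * (A$i$1 * pd 1 f z + A$i$2 * pd 2 f z)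
      + \<rho> z * (A$i$1 * pd i (pd 1 f) z + A$i$2 * pd i (pd 2 f) z))
      + ((pd i \<rho> z * f z + \<rho> z * pd i f z) * U z $ i + \<rho> z * f z * pd i (\<lambda>z. U z $ i) z))"
    by (simp only: pd_add pd_mult pd_const differentiable_add differentiable_mult
        differentiable_const diff) (simp add: algebra_simps)
  also have "\<dots> = \<rho> z * Lop A W f z + f z * \<rho> z * weighted_div Phi U z"
    by (simp add: \<rho> W A21 Lop_def weighted_div_def div_field_def trace_def matrix_matrix_mult_def
        matrix_vector_mult_def hess_def grad_def inner_vec_def sum_2 algebra_simps)
  finally show ?thesis
    unfolding \<rho>_def by simp
qed

lemma C1_field_exp_weight_flux:
  fixes A :: "real^2^2" and U :: "real^2 \<Rightarrow> real^2"
  assumes "Ck 1 Phi" and "C1_field U" and "Ck 1 f" and "\<And>i. Ck 1 (pd i f)"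
  shows "C1_field (\<lambda>z. (exp (2 * Phi z) / 2) *\<^sub>R (A *v grad f z) + (exp (2 * Phi z) * f z) *\<^sub>R U z)"
proof -
  define \<rho> where "\<rho> z = exp (2 * Phi z)" for z
  have "Ck 1 \<rho>"
    using Ck1_exp_weight(1)[OF assms(1)] by (simp add: \<rho>_def[abs_def])
  then have "Ck 1 (\<lambda>z. 1/2 * \<rho> z * (A$i$1 * pd 1 f z + A$i$2 * pd 2 f z) + \<rho> z * f z * U z $ i)" for i
    using assms(2-4) unfolding C1_field_def by (intro Ck1_add Ck1_mult Ck1_const) auto
  then show ?thesis
    by (simp add: C1_field_def matrix_vector_mult_def grad_def sum_2 flip: \<rho>_def)
qed

lemma integral_Lop_exp_density:
  fixes A :: "real^2^2" and U W :: "real^2 \<Rightarrow> real^2"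
  assumes A: "sym_mat A" and Phi: "Ck 1 Phi" and U: "C1_field U"
    and W: "\<And>z. W z = U z + A *v grad Phi z" and f: "f \<in> C0_inf"
  shows "integral\<^sup>L (density lborel (\<lambda>z. ennreal (exp (2 * Phi z)))) (Lop A W f)
    = - integral\<^sup>L lborel (\<lambda>z. f z * exp (2 * Phi z) * weighted_div Phi U z)"
proof -
  define \<rho> where "\<rho> z = exp (2 * Phi z)" for z
  define flux where "flux z = (\<rho> z / 2) *\<^sub>R (A *v grad f z) + (\<rho> z * f z) *\<^sub>R U z" for z
  define F where "F z = f z * \<rho> z * weighted_div Phi U z" for z
  obtain R where R: "\<And>z. norm z > R \<Longrightarrow> f z = 0"
    using C0_inf_vanishes_outside_ball[OF f] by blast
  have \<rho>: "Ck 1 \<rho>"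
    using Ck1_exp_weight[OF Phi] unfolding \<rho>_def[abs_def] by auto
  have pointwise: "\<rho> z * Lop A W f z = div_field flux z - F z" for z
    using Lop_exp_weight_divergence_form[OF A Phi U W C0_inf_Ck1[OF f]]
    unfolding \<rho>_def F_def flux_def by simp
  have flux: "C1_field flux"
    unfolding flux_def \<rho>_def using C1_field_exp_weight_flux[OF Phi U C0_inf_Ck1[OF f]] .
  have flux_vanish: "flux z = 0" if "norm z > R" for z
    using R[OF that] pd_eq_0_outside_ball[OF R that]
    by (simp add: flux_def grad_def vec_eq_iff matrix_vector_mult_def)
  have F: "continuous_on UNIV F"
    unfolding F_def[abs_def] using C0_inf_Ck1(1)[OF f] \<rho>
    by (auto intro!: continuous_intros continuous_on_weighted_div Phi U)
  have intF: "integrable lborel F"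
    by (rule integrable_vanishing_outside_ball[OF F, of R]) (simp add: F_def R)
  have "continuous_on UNIV (\<lambda>z. (div_field flux z - F z) / \<rho> z)"
    using \<rho> by (auto intro!: continuous_intros continuous_on_div_field flux F simp: \<rho>_def)
  moreover have "Lop A W f = (\<lambda>z. (div_field flux z - F z) / \<rho> z)"
    using pointwise by (auto simp: fun_eq_iff \<rho>_def field_simps)
  ultimately have Lop: "continuous_on UNIV (Lop A W f)"
    by simp
  have "integral\<^sup>L (density lborel (\<lambda>z. ennreal (\<rho> z))) (Lop A W f)
      = integral\<^sup>L lborel (\<lambda>z. \<rho> z * Lop A W f z)"
    using \<rho> Lop by (subst integral_density) (auto intro: borel_measurable_continuous_onI simp: \<rho>_def)
  also have "\<dots> = integral\<^sup>L lborel (div_field flux) - integral\<^sup>L lborel F"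
    using pointwise integral_div_field_eq_0(1)[OF flux flux_vanish] intF by simp
  also have "\<dots> = - integral\<^sup>L lborel F"
    using integral_div_field_eq_0(2)[OF flux flux_vanish] by simp
  finally show ?thesis
    unfolding \<rho>_def F_def by simp
qed

section \<open>Smooth bump functions and the fundamental lemma of the calculus of variations\<close>

text \<open>\<open>flat_exp n\<close> is the \<open>n\<close>-th derivative of the smooth function that is \<open>exp (-1/t)\<close> for
  \<open>t > 0\<close> and \<open>0\<close> otherwise.\<close>

primrec flat_exp_poly :: "nat \<Rightarrow> real poly" where
  "flat_exp_poly 0 = 1"
| "flat_exp_poly (Suc n) = [:0, 0, 1:] * (flat_exp_poly n - pderiv (flat_exp_poly n))"

definition flat_exp :: "nat \<Rightarrow> real \<Rightarrow> real" where
  "flat_exp n t = (if t > 0 then poly (flat_exp_poly n) (1/t) * exp (-1/t) else 0)"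

lemma poly_times_exp_neg_tendsto_0: "((\<lambda>s::real. poly p s * exp (-s)) \<longlongrightarrow> 0) at_top"
proof -
  have "((\<lambda>s. \<Sum>i\<le>degree p. coeff p i * (s ^ i / exp s)) \<longlongrightarrow> 0) at_top"
    by (intro tendsto_null_sum tendsto_mult_right_zero tendsto_power_div_exp_0)
  moreover have "poly p s * exp (-s) = (\<Sum>i\<le>degree p. coeff p i * (s ^ i / exp s))" for s
    by (simp add: poly_altdef sum_distrib_right sum_divide_distrib exp_minus divide_inverse mult.assoc)
  ultimately show ?thesis by simp
qed

lemma flat_exp_has_real_derivative_0: "(flat_exp n has_real_derivative 0) (at 0)"
proof -
  have "((\<lambda>s. poly (pCons 0 (flat_exp_poly n)) s * exp (-s)) \<longlongrightarrow> 0) at_top"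
    by (rule poly_times_exp_neg_tendsto_0)
  then have "((\<lambda>y. poly (pCons 0 (flat_exp_poly n)) (inverse y) * exp (- inverse y)) \<longlongrightarrow> 0) (at_right 0)"
    by (rule filterlim_compose[OF _ filterlim_inverse_at_top_right])
  then have right: "((\<lambda>y. flat_exp n y / y) \<longlongrightarrow> 0) (at_right 0)"
    by (rule Lim_transform_eventually)
      (auto simp: eventually_at_right_field flat_exp_def field_simps intro!: exI[of _ 1])
  have left: "((\<lambda>y. flat_exp n y / y) \<longlongrightarrow> 0) (at_left 0)"
    by (rule Lim_transform_eventually[of "\<lambda>_. 0"])
      (auto simp: eventually_at_left_field flat_exp_def intro!: exI[of _ "-1"])
  have "flat_exp n 0 = 0"
    by (simp add: flat_exp_def)
  with left right show ?thesis
    by (simp add: has_field_derivative_iff filterlim_at_split)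
qed

lemma flat_exp_has_real_derivative: "(flat_exp n has_real_derivative flat_exp (Suc n) t) (at t)"
proof -
  consider "t > 0" | "t < 0" | "t = 0" by linarith
  then show ?thesis
  proof cases
    case 1
    let ?p = "flat_exp_poly n"
    have "((\<lambda>t. poly ?p (1/t) * exp (-1/t)) has_real_derivative
       (poly (pderiv ?p) (1/t) * (- 1 / t^2)) * exp (-1/t) + poly ?p (1/t) * (exp (-1/t) * (1/t^2))) (at t)"
      using 1 by (auto intro!: derivative_eq_intros simp: power2_eq_square field_simps)
    moreover have "(poly (pderiv ?p) (1/t) * (- 1 / t^2)) * exp (-1/t) + poly ?p (1/t) * (exp (-1/t) * (1/t^2))
        = flat_exp (Suc n) t"
      using 1 by (simp add: flat_exp_def algebra_simps power2_eq_square)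
    ultimately have "((\<lambda>t. poly ?p (1/t) * exp (-1/t)) has_real_derivative flat_exp (Suc n) t) (at t)"
      by simp
    then show ?thesis
      by (rule has_field_derivative_transform_within_open[where S="{0<..}"])
        (use 1 in \<open>auto simp: flat_exp_def\<close>)
  next
    case 2
    have "(flat_exp n has_real_derivative 0) (at t)"
      by (rule has_field_derivative_transform_within_open[where S="{..<0}", OF DERIV_const])
        (use 2 in \<open>auto simp: flat_exp_def\<close>)
    then show ?thesis
      using 2 by (simp add: flat_exp_def)
  next
    case 3
    then show ?thesis
      using flat_exp_has_real_derivative_0 by (simp add: flat_exp_def)
  qed
qed

inductive flat_exp_algebra :: "(real^2 \<Rightarrow> real) \<Rightarrow> bool" where
  ridge: "flat_exp_algebra (\<lambda>z. flat_exp n (a * z$j + b))"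
| const: "flat_exp_algebra (\<lambda>z. c)"
| add: "flat_exp_algebra f \<Longrightarrow> flat_exp_algebra g \<Longrightarrow> flat_exp_algebra (\<lambda>z. f z + g z)"
| mult: "flat_exp_algebra f \<Longrightarrow> flat_exp_algebra g \<Longrightarrow> flat_exp_algebra (\<lambda>z. f z * g z)"

lemma flat_exp_ridge_has_derivative:
  "((\<lambda>z::real^2. flat_exp n (a * z$j + b)) has_derivative
     (\<lambda>h. flat_exp (Suc n) (a * z$j + b) * (a * h$j))) (at z)"
proof -
  have "((\<lambda>z::real^2. a * z$j + b) has_derivative (\<lambda>h. a * h$j)) (at z)"
    by (auto intro!: derivative_eq_intros)
  moreover have "(flat_exp n has_derivative (\<lambda>x. flat_exp (Suc n) (a * z$j + b) * x)) (at (a * z$j + b))"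
    using flat_exp_has_real_derivative by (simp add: has_field_derivative_def)
  ultimately show ?thesis
    using diff_chain_at by (fastforce simp: o_def)
qed

lemma flat_exp_algebra_pd:
  "flat_exp_algebra f \<Longrightarrow> (\<forall>z. f differentiable at z) \<and> (\<forall>i. flat_exp_algebra (pd i f))"
proof (induction rule: flat_exp_algebra.induct)
  case (ridge n a j b)
  have "pd i (\<lambda>z. flat_exp n (a * z$j + b)) = (\<lambda>z. (if i = j then a else 0) * flat_exp (Suc n) (a * z$j + b))" for i
    by (rule ext, subst pd_eq_derivative[OF flat_exp_ridge_has_derivative]) (auto simp: axis_def)
  moreover have "(\<lambda>z. flat_exp n (a * z$j + b)) differentiable at z" for z
    using flat_exp_ridge_has_derivative unfolding differentiable_def by blast
  ultimately show ?case
    by (auto intro: flat_exp_algebra.intros)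
next
  case (const c)
  have "pd i (\<lambda>z. c) = (\<lambda>z. 0)" for i
    by (simp add: fun_eq_iff)
  then show ?case
    by (auto intro: flat_exp_algebra.intros)
next
  case (add f g)
  then have "pd i (\<lambda>z. f z + g z) = (\<lambda>z. pd i f z + pd i g z)" for i
    by (simp add: fun_eq_iff pd_add)
  then show ?case
    using add.IH by (auto intro: flat_exp_algebra.intros)
next
  case (mult f g)
  then have "pd i (\<lambda>z. f z * g z) = (\<lambda>z. pd i f z * g z + f z * pd i g z)" for i
    by (simp add: fun_eq_iff pd_mult)
  then show ?case
    using mult.IH mult.hyps by (auto intro!: flat_exp_algebra.intros)
qed

lemma flat_exp_algebra_Ck: "flat_exp_algebra f \<Longrightarrow> Ck k f"
proof (induction k arbitrary: f)
  case 0
  then show ?case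
    using flat_exp_algebra_pd
    by (simp add: differentiable_at_imp_differentiable_on differentiable_imp_continuous_on)
next
  case (Suc k)
  then show ?case
    using flat_exp_algebra_pd[OF Suc.prems]
    by (simp add: differentiable_at_imp_differentiable_on differentiable_imp_continuous_on)
qed

lemma dist_le_coordinates: "dist z w \<le> \<bar>z$1 - w$1\<bar> + \<bar>z$2 - w$2\<bar>" for z w :: "real^2"
  using norm_le_l1_cart[of "z - w"] by (simp add: dist_norm sum_2)

lemma C0_inf_bump:
  assumes "r > 0"
  obtains f where "f \<in> C0_inf" "\<And>z. f z \<ge> 0" "f z0 > 0" "\<And>z. f z \<noteq> 0 \<Longrightarrow> dist z z0 < r"
proof -
  define \<delta> where "\<delta> = r / 2"
  define f where "f z = flat_exp 0 (1 * z$1 + (\<delta> - z0$1)) * flat_exp 0 ((-1) * z$1 + (\<delta> + z0$1))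
     * flat_exp 0 (1 * z$2 + (\<delta> - z0$2)) * flat_exp 0 ((-1) * z$2 + (\<delta> + z0$2))" for z :: "real^2"
  have "flat_exp_algebra f"
    unfolding f_def[abs_def] by (intro flat_exp_algebra.intros)
  then have Ck: "Ck k f" for k
    by (rule flat_exp_algebra_Ck)
  have supp: "dist z z0 < r" if "f z \<noteq> 0" for z
  proof -
    have "\<bar>z$1 - z0$1\<bar> < \<delta>" "\<bar>z$2 - z0$2\<bar> < \<delta>"
      using that by (auto simp: f_def flat_exp_def split: if_splits)
    then show ?thesis
      using dist_le_coordinates[of z z0] by (simp add: \<delta>_def)
  qed
  then have "bounded {z. f z \<noteq> 0}"
    by (intro bounded_subset[OF bounded_ball[of z0 r]]) (auto simp: dist_commute)
  then have "f \<in> C0_inf"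
    using Ck compact_closure by (auto simp: C0_inf_def)
  moreover have "f z \<ge> 0" for z
    by (simp add: f_def flat_exp_def)
  moreover have "f z0 > 0"
    using assms by (simp add: f_def flat_exp_def \<delta>_def)
  ultimately show ?thesis
    using that supp by blast
qed

lemma integral_pos_if_continuous_nonneg:
  fixes G :: "real^2 \<Rightarrow> real"
  assumes cont: "continuous_on UNIV G" and nonneg: "\<And>z. G z \<ge> 0" and "integrable lborel G"
    and pos: "G z0 > 0"
  shows "integral\<^sup>L lborel G > 0"
proof -
  define c where "c = G z0 / 2"
  obtain r where r: "r > 0" "\<And>z. dist z z0 < r \<Longrightarrow> dist (G z) (G z0) < c"
    using cont pos unfolding continuous_on_iff c_def by (metis UNIV_I half_gt_zero)
  have c: "c > 0"
    using pos by (simp add: c_def)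
  have ind: "integrable lborel (indicator (cball z0 (r/2)) :: real^2 \<Rightarrow> real)"
    using borel_integrable_compact[of "cball z0 (r/2)" "\<lambda>_. 1::real"] by simp
  have "G z \<ge> c" if "z \<in> cball z0 (r/2)" for z
  proof -
    have "dist (G z) (G z0) < c"
      using r that by (intro r(2)) (auto simp: dist_commute)
    then show ?thesis
      unfolding dist_real_def c_def by arith
  qed
  then have "indicator (cball z0 (r/2)) z * c \<le> G z" for z
    using nonneg by (simp add: indicator_def)
  then have "integral\<^sup>L lborel (\<lambda>z. indicator (cball z0 (r/2)) z * c) \<le> integral\<^sup>L lborel G"
    using ind assms(3) by (intro integral_mono) auto
  moreover have "integral\<^sup>L lborel (\<lambda>z. indicator (cball z0 (r/2)) z * c) = measure lborel (cball z0 (r/2)) * c"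
    using ind by simp
  moreover have "measure lborel (cball z0 (r/2)) > 0"
    using r by simp
  ultimately show ?thesis
    using c by (smt (verit) mult_pos_pos)
qed

lemma continuous_eq_0_if_test_integrals_vanish:
  fixes Q \<rho> :: "real^2 \<Rightarrow> real"
  assumes Q: "continuous_on UNIV Q" and \<rho>: "continuous_on UNIV \<rho>" "\<And>z. \<rho> z > 0"
    and vanish: "\<And>f. f \<in> C0_inf \<Longrightarrow> integral\<^sup>L lborel (\<lambda>z. f z * \<rho> z * Q z) = 0"
  shows "Q z0 = 0"
proof (rule ccontr)
  assume "Q z0 \<noteq> 0"
  then obtain r where r: "r > 0" "\<And>z. dist z z0 < r \<Longrightarrow> dist (Q z) (Q z0) < \<bar>Q z0\<bar>"
    using Q unfolding continuous_on_iff by (metis UNIV_I zero_less_abs_iff)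
  obtain f where f: "f \<in> C0_inf" "\<And>z. f z \<ge> 0" "f z0 > 0" "\<And>z. f z \<noteq> 0 \<Longrightarrow> dist z z0 < r"
    using C0_inf_bump[OF r(1)] by blast
  define G where "G z = f z * \<rho> z * Q z * Q z0" for z
  have same_sign: "Q z * Q z0 > 0" if "f z \<noteq> 0" for z
    using r(2)[OF f(4)[OF that]] by (auto simp: dist_real_def abs_if zero_less_mult_iff split: if_splits)
  have "G z \<ge> 0" for z
    using same_sign[of z] f(2)[of z] \<rho>(2)[of z] by (cases "f z = 0") (auto simp: G_def mult.assoc)
  moreover have "continuous_on UNIV f"
    using C0_inf_Ck1(1)[OF f(1)] by simp
  then have cont: "continuous_on UNIV G"
    unfolding G_def[abs_def] by (intro continuous_intros \<rho> Q)
  moreover obtain R where "\<And>z. norm z > R \<Longrightarrow> f z = 0"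
    using C0_inf_vanishes_outside_ball[OF f(1)] by blast
  then have "integrable lborel G"
    by (intro integrable_vanishing_outside_ball[OF cont, of R]) (simp add: G_def)
  moreover have "G z0 > 0"
    using same_sign f(3) \<rho>(2)[of z0] by (simp add: G_def mult.assoc)
  ultimately have "integral\<^sup>L lborel G > 0"
    by (metis integral_pos_if_continuous_nonneg)
  moreover have "integral\<^sup>L lborel G = integral\<^sup>L lborel (\<lambda>z. f z * \<rho> z * Q z) * Q z0"
    unfolding G_def by simp
  ultimately show False
    using vanish[OF f(1)] by simp
qed

section \<open>Invariance with respect to \<open>exp (2 Phi) dz\<close>\<close>

lemma inf_invariant_exp_density_iff:
  fixes A :: "real^2^2" and U W :: "real^2 \<Rightarrow> real^2"
  assumes "sym_mat A" and Phi: "Ck 1 Phi" and U: "C1_field U" and "\<And>z. W z = U z + A *v grad Phi z"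
  shows "inf_invariant (density lborel (\<lambda>z. ennreal (exp (2 * Phi z)))) (Lop A W)
    \<longleftrightarrow> (\<forall>z. weighted_div Phi U z = 0)"
proof
  assume inv: "inf_invariant (density lborel (\<lambda>z. ennreal (exp (2 * Phi z)))) (Lop A W)"
  have "continuous_on UNIV (\<lambda>z. exp (2 * Phi z))"
    using Ck1_exp_weight(1)[OF Phi] by simp
  moreover have "integral\<^sup>L lborel (\<lambda>z. f z * exp (2 * Phi z) * weighted_div Phi U z) = 0"
    if "f \<in> C0_inf" for f
    using inv that integral_Lop_exp_density[OF assms that] by (simp add: inf_invariant_def)
  ultimately show "\<forall>z. weighted_div Phi U z = 0"
    using continuous_eq_0_if_test_integrals_vanish[OF continuous_on_weighted_div[OF Phi U]] by simp
qed (simp add: inf_invariant_def integral_Lop_exp_density[OF assms])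

lemma div_mu_zero_iff_inf_invariant: "div_mu_zero \<mu> H \<longleftrightarrow> inf_invariant \<mu> (Lop 0 H)"
proof -
  have "Lop 0 H f = (\<lambda>z. H z \<bullet> grad f z)" for f
    by (simp add: Lop_def fun_eq_iff trace_def matrix_matrix_mult_def)
  then show ?thesis
    by (simp add: div_mu_zero_def inf_invariant_def)
qed

text \<open>If \<open>B\<close> is divergence free for \<open>exp (2 Phi) dz\<close>, then \<open>\<langle>\<nabla>Phi, B\<rangle> = - div B / 2\<close>.\<close>

lemma is_SOHHD_iff_div_field_eq_0:
  assumes "Ck 1 Phi" "C1_field B" "\<And>z. weighted_div Phi B z = 0"
  shows "is_SOHHD Phi B \<longleftrightarrow> (\<forall>z. div_field B z = 0)"
proof -
  have "grad Phi z \<bullet> B z = 0 \<longleftrightarrow> div_field B z = 0" for z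
    using assms(3)[of z] by (auto simp: weighted_div_def)
  then show ?thesis
    using assms(1,2) by (auto simp: is_SOHHD_def)
qed

section \<open>Quadratic potentials and quadratic drifts\<close>

lemma quadratic_form_gradient:
  fixes S :: "real^2^2"
  assumes S: "sym_mat S"
    and Phi: "\<And>z. Phi z = 1/2 * (S$1$1 * (z$1)^2 + 2 * S$1$2 * z$1 * z$2 + S$2$2 * (z$2)^2)"
  shows "Ck 1 Phi" and "grad Phi z = S *v z"
proof -
  have deriv: "(Phi has_derivative (\<lambda>h. (S *v z) \<bullet> h)) (at z)" for z
    unfolding Phi[abs_def] using sym_mat_nth_21[OF S]
    by (auto intro!: derivative_eq_intros
        simp: inner_vec_def matrix_vector_mult_def sum_2 algebra_simps power2_eq_square)
  have cont: "continuous_on UNIV ((*v) S)"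
    by (rule matrix_vector_mult_linear_continuous_on)
  show "Ck 1 Phi"
    using Ck1_has_gradientI(1)[OF deriv cont] .
  show "grad Phi z = S *v z"
    using Ck1_has_gradientI(2)[OF deriv cont] by (simp add: grad_def vec_eq_iff)
qed

definition quadratic_field :: "real^2 \<Rightarrow> real^2^2 \<Rightarrow> real^2 \<Rightarrow> real^2 \<Rightarrow> real^2 \<Rightarrow> real^2 \<Rightarrow> real^2" where
  "quadratic_field c M u v w z = c + M *v z + (z$1)\<^sup>2 *\<^sub>R u + (z$1 * z$2) *\<^sub>R v + (z$2)\<^sup>2 *\<^sub>R w"

lemma quadratic_field_C1_div:
  shows "C1_field (quadratic_field c M u v w)"
    and "div_field (quadratic_field c M u v w) z
      = trace M + (2 * u$1 + v$2) * z$1 + (v$1 + 2 * w$2) * z$2"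
proof -
  define D where "D j z = (\<chi> k. M$j$k) + (2 * u$j * z$1 + v$j * z$2) *\<^sub>R axis 1 1
    + (v$j * z$1 + 2 * w$j * z$2) *\<^sub>R axis 2 1" for j and z :: "real^2"
  have "(\<lambda>z. quadratic_field c M u v w z $ j) =
      (\<lambda>z. c$j + M$j$1 * z$1 + M$j$2 * z$2 + (z$1)\<^sup>2 * u$j + z$1 * z$2 * v$j + (z$2)\<^sup>2 * w$j)" for j
    by (simp add: fun_eq_iff quadratic_field_def matrix_vector_mult_def sum_2)
  then have "((\<lambda>z. quadratic_field c M u v w z $ j) has_derivative (\<lambda>h. D j z \<bullet> h)) (at z)" for j z
    by (auto intro!: derivative_eq_intros simp: D_def inner_vec_def sum_2 algebra_simps power2_eq_square)
  moreover have "continuous_on UNIV (D j)" for j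
    unfolding D_def[abs_def] by (intro continuous_intros)
  ultimately have "Ck 1 (\<lambda>z. quadratic_field c M u v w z $ j)"
    and "pd j (\<lambda>z. quadratic_field c M u v w z $ j) z = D j z $ j" for j z
    by (rule Ck1_has_gradientI)+
  then show "C1_field (quadratic_field c M u v w)"
    and "div_field (quadratic_field c M u v w) z
      = trace M + (2 * u$1 + v$2) * z$1 + (v$1 + 2 * w$2) * z$2"
    by (auto simp: C1_field_def div_field_def D_def trace_def sum_2 algebra_simps)
qed

lemma weighted_div_quadratic_field_drop_linear:
  assumes "grad Phi z = S *v z" "trace M = 0" "(S *v z) \<bullet> (M *v z) = 0"
  shows "weighted_div Phi (quadratic_field c M u v w) z = weighted_div Phi (quadratic_field c 0 u v w) z"
  using assms by (simp add: weighted_div_def quadratic_field_C1_div(2) quadratic_field_def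
      inner_add_right trace_def sum_2)

lemma odd_cubic_eq_0_iff:
  "(\<forall>z::real^2. c1 * (z$1)^3 + c2 * (z$2)^3 + c3 * z$1 * (z$2)\<^sup>2 + c4 * (z$1)\<^sup>2 * z$2
      + c5 * z$1 + c6 * z$2 = 0)
    \<longleftrightarrow> c1 = 0 \<and> c2 = 0 \<and> c3 = 0 \<and> c4 = 0 \<and> c5 = 0 \<and> c6 = 0"
proof
  assume "\<forall>z::real^2. c1 * (z$1)^3 + c2 * (z$2)^3 + c3 * z$1 * (z$2)\<^sup>2 + c4 * (z$1)\<^sup>2 * z$2
      + c5 * z$1 + c6 * z$2 = 0"
  from this[rule_format, of "vector [1, 0]"] this[rule_format, of "vector [2, 0]"]
    this[rule_format, of "vector [0, 1]"] this[rule_format, of "vector [0, 2]"]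
    this[rule_format, of "vector [1, 1]"] this[rule_format, of "vector [1, -1]"]
  show "c1 = 0 \<and> c2 = 0 \<and> c3 = 0 \<and> c4 = 0 \<and> c5 = 0 \<and> c6 = 0"
    by simp
qed simp

lemma weighted_div_quadratic_field_eq_0_iff:
  fixes S :: "real^2^2"
  assumes "sym_mat S" and "\<And>z. grad Phi z = S *v z"
  shows "(\<forall>z. weighted_div Phi (quadratic_field c 0 u v w) z = 0) \<longleftrightarrow>
    S$1$1 * u$1 + S$1$2 * u$2 = 0
    \<and> S$1$2 * w$1 + S$2$2 * w$2 = 0
    \<and> S$1$1 * w$1 + S$1$2 * v$1 + S$1$2 * w$2 + S$2$2 * v$2 = 0
    \<and> S$1$1 * v$1 + S$1$2 * u$1 + S$1$2 * v$2 + S$2$2 * u$2 = 0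
    \<and> S$1$1 * c$1 + S$1$2 * c$2 + u$1 + v$2 / 2 = 0
    \<and> S$1$2 * c$1 + S$2$2 * c$2 + w$2 + v$1 / 2 = 0"
proof -
  have "weighted_div Phi (quadratic_field c 0 u v w) z = 2 * (
      (S$1$1 * u$1 + S$1$2 * u$2) * (z$1)^3 + (S$1$2 * w$1 + S$2$2 * w$2) * (z$2)^3
      + (S$1$1 * w$1 + S$1$2 * v$1 + S$1$2 * w$2 + S$2$2 * v$2) * z$1 * (z$2)\<^sup>2
      + (S$1$1 * v$1 + S$1$2 * u$1 + S$1$2 * v$2 + S$2$2 * u$2) * (z$1)\<^sup>2 * z$2
      + (S$1$1 * c$1 + S$1$2 * c$2 + u$1 + v$2 / 2) * z$1
      + (S$1$2 * c$1 + S$2$2 * c$2 + w$2 + v$1 / 2) * z$2)" for z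
    using sym_mat_nth_21[OF assms(1)]
    by (simp add: assms(2) weighted_div_def quadratic_field_C1_div(2) quadratic_field_def
        inner_vec_def matrix_vector_mult_def trace_def sum_2 algebra_simps power2_eq_square power3_eq_cube)
  then show ?thesis
    by (simp only: mult_eq_0_iff numeral_neq_zero simp_thms odd_cubic_eq_0_iff)
qed

lemma drift_orthogonal_to_potential_gradient:
  fixes A G S :: "real^'n^'n"
  assumes S: "transpose S = S" and Lyapunov: "S ** G + transpose G ** S = 2 *\<^sub>R (S ** A ** S)"
  shows "(S *v z) \<bullet> ((G - A ** S) *v z) = 0"
proof -
  have S_left: "S *v x = x v* S" for x
    using transpose_matrix_vector[of S x] S by simp
  have G_left: "G *v x = x v* transpose G" for x
    using transpose_matrix_vector[of "transpose G" x] by simp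
  have SG: "(S *v z) \<bullet> (G *v z) = z \<bullet> ((S ** G) *v z)"
    by (subst S_left) (simp add: dot_lmul_matrix matrix_vector_mul_assoc)
  have GS: "(S *v z) \<bullet> (G *v z) = z \<bullet> ((transpose G ** S) *v z)"
    by (subst inner_commute, subst G_left) (simp only: dot_lmul_matrix matrix_vector_mul_assoc)
  have SAS: "(S *v z) \<bullet> ((A ** S) *v z) = z \<bullet> ((S ** A ** S) *v z)"
    by (subst S_left) (simp add: dot_lmul_matrix matrix_vector_mul_assoc matrix_mul_assoc)
  have "2 * ((S *v z) \<bullet> (G *v z)) = z \<bullet> ((S ** G) *v z) + z \<bullet> ((transpose G ** S) *v z)"
    using SG GS by simp
  also have "\<dots> = z \<bullet> ((S ** G + transpose G ** S) *v z)"
    by (simp add: matrix_vector_mult_add_rdistrib inner_add_right)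
  also have "\<dots> = 2 * ((S *v z) \<bullet> ((A ** S) *v z))"
    by (simp add: Lyapunov SAS scaleR_matrix_vector_assoc[symmetric])
  finally show ?thesis
    by (simp add: matrix_vector_mult_diff_rdistrib inner_diff_right)
qed

lemma inf_invariant_quadratic_drift_iff:
  fixes A S M :: "real^2^2"
  assumes "sym_mat A" and S: "sym_mat S"
    and Phi: "\<And>z. Phi z = 1/2 * (S$1$1 * (z$1)^2 + 2 * S$1$2 * z$1 * z$2 + S$2$2 * (z$2)^2)"
    and "trace M = 0" "\<And>z. (S *v z) \<bullet> (M *v z) = 0"
    and W: "\<And>z. W z = quadratic_field c M u v w z + A *v (S *v z)"
  shows "inf_invariant (density lborel (\<lambda>z. ennreal (exp (2 * Phi z)))) (Lop A W)
    \<longleftrightarrow> (\<forall>z. weighted_div Phi (quadratic_field c 0 u v w) z = 0)"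
proof -
  note Phi = quadratic_form_gradient[OF S Phi]
  have "inf_invariant (density lborel (\<lambda>z. ennreal (exp (2 * Phi z)))) (Lop A W)
    \<longleftrightarrow> (\<forall>z. weighted_div Phi (quadratic_field c M u v w) z = 0)"
    using assms(1) Phi(1) quadratic_field_C1_div(1) by (rule inf_invariant_exp_density_iff) (simp add: W Phi(2))
  also have "\<dots> \<longleftrightarrow> (\<forall>z. weighted_div Phi (quadratic_field c 0 u v w) z = 0)"
    using weighted_div_quadratic_field_drop_linear[OF Phi(2)] assms(4,5) by simp
  finally show ?thesis .
qed

lemma inf_invariant_linear_drift:
  fixes A S M :: "real^2^2"
  assumes "sym_mat A" and S: "sym_mat S"
    and Phi: "\<And>z. Phi z = 1/2 * (S$1$1 * (z$1)^2 + 2 * S$1$2 * z$1 * z$2 + S$2$2 * (z$2)^2)"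
    and "trace M = 0" "\<And>z. (S *v z) \<bullet> (M *v z) = 0"
    and W: "\<And>z. W z = M *v z + A *v (S *v z)"
  shows "inf_invariant (density lborel (\<lambda>z. ennreal (exp (2 * Phi z)))) (Lop A W)"
proof -
  have "W z = quadratic_field 0 M 0 0 0 z + A *v (S *v z)" for z
    by (simp add: W quadratic_field_def)
  moreover have "weighted_div Phi (quadratic_field 0 0 0 0 0) z = 0" for z
    by (simp add: weighted_div_def quadratic_field_C1_div(2) quadratic_field_def trace_def)
  ultimately show ?thesis
    using inf_invariant_quadratic_drift_iff[OF assms(1-5)] by blast
qed

lemma is_SOHHD_quadratic_field_iff:
  assumes "Ck 1 Phi" and "\<And>z. weighted_div Phi (quadratic_field c M u v w) z = 0" and "trace M = 0"
  shows "is_SOHHD Phi (quadratic_field c M u v w) \<longleftrightarrow> 2 * u$1 + v$2 = 0 \<and> v$1 + 2 * w$2 = 0"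
proof -
  have "is_SOHHD Phi (quadratic_field c M u v w)
      \<longleftrightarrow> (\<forall>z::real^2. (2 * u$1 + v$2) * z$1 + (v$1 + 2 * w$2) * z$2 = 0)"
    using is_SOHHD_iff_div_field_eq_0[OF assms(1) quadratic_field_C1_div(1) assms(2)] assms(3)
    by (simp add: quadratic_field_C1_div(2))
  also have "\<dots> \<longleftrightarrow> 2 * u$1 + v$2 = 0 \<and> v$1 + 2 * w$2 = 0"
    using odd_cubic_eq_0_iff[of 0 0 0 0 "2 * u$1 + v$2" "v$1 + 2 * w$2"] by simp
  finally show ?thesis .
qed

theorem lemma3p6:
  fixes A G S :: "real^2^2"
    and a00 a20 a21 a22 b00 b20 b21 b22 :: real
    and Phi :: "real^2 \<Rightarrow> real" and \<mu> :: "(real^2) measure"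
    and H P Ptil Gtil :: "real^2 \<Rightarrow> real^2"
  assumes A_sym: "sym_mat A" and A_pd: "pos_def_mat A"
    and S_sym: "sym_mat S"
    and SG: "S ** G + transpose G ** S = 2 *\<^sub>R (S ** A ** S)"
    and trG: "trace (G - A ** S) = 0"
    and Phi_def: "\<And>z. Phi z = 1/2 * (S$1$1 * (z$1)^2 + 2 * S$1$2 * z$1 * z$2 + S$2$2 * (z$2)^2)"
    and mu_def: "\<mu> = density lborel (\<lambda>z. ennreal (exp (2 * Phi z)))"
    and H_def: "\<And>z. H z = vector [a00 + a20 * (z$1)^2 + a21 * z$1 * z$2 + a22 * (z$2)^2,
                                    b00 + b20 * (z$1)^2 + b21 * z$1 * z$2 + b22 * (z$2)^2]"
    and P_def: "\<And>z. P z = G *v z + H z"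
    and Ptil_def: "\<And>z. Ptil z = S *v z + P z - A *v (S *v z)"
    and Gtil_def: "\<And>z. Gtil z = S *v z + (G - A ** S) *v z"
  shows
   "(let sys = (S$1$1 * a20 + S$1$2 * b20 = 0
              \<and> S$1$2 * a22 + S$2$2 * b22 = 0
              \<and> S$1$1 * a22 + S$1$2 * a21 + S$1$2 * b22 + S$2$2 * b21 = 0
              \<and> S$1$1 * a21 + S$1$2 * a20 + S$1$2 * b21 + S$2$2 * b20 = 0
              \<and> S$1$1 * a00 + S$1$2 * b00 + a20 + b21 / 2 = 0
              \<and> S$1$2 * a00 + S$2$2 * b00 + b22 + a21 / 2 = 0)
     in (sys \<longleftrightarrow> div_mu_zero \<mu> H)
      \<and> (sys \<longleftrightarrow> (\<forall>z. grad Phi z \<bullet> H z + 1/2 * div_field H z = 0))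
      \<and> (sys \<longleftrightarrow> inf_invariant \<mu> (Lop A P))
      \<and> (sys \<longrightarrow> (is_SOHHD Phi (\<lambda>z. (G - A ** S) *v z + H z)
                   \<longleftrightarrow> (a20 = - b21 / 2 \<and> b22 = - a21 / 2))))
    \<and> (inf_invariant \<mu> (Lop A P) \<longrightarrow>
         inf_invariant \<mu> (Lop A (\<lambda>z. G *v z))
       \<and> inf_invariant \<mu> (Lop (mat 1) (\<lambda>z. S *v z))
       \<and> inf_invariant \<mu> (Lop (mat 1) Gtil)
       \<and> inf_invariant \<mu> (Lop (mat 1) Ptil))"
proof -
  define M where "M = G - A ** S"
  define c u v w :: "real^2"
    where "c = vector [a00, b00]" and "u = vector [a20, b20]" and "v = vector [a21, b21]"
      and "w = vector [a22, b22]"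
  note Phi = quadratic_form_gradient[OF S_sym Phi_def]
  have M: "trace M = 0" "\<And>z. (S *v z) \<bullet> (M *v z) = 0"
    using trG drift_orthogonal_to_potential_gradient[of S G A] S_sym SG
    by (simp_all add: M_def sym_mat_def)
  have H: "H = quadratic_field c 0 u v w"
    by (simp add: fun_eq_iff H_def c_def u_def v_def w_def quadratic_field_def vec_eq_iff forall_2
        algebra_simps)
  have drift: "G *v z + H z = quadratic_field c M u v w z + A *v (S *v z)" for z
    by (simp add: H M_def quadratic_field_def matrix_vector_mult_diff_rdistrib matrix_vector_mul_assoc)
  have inf_invariant_iff: "\<And>A' W. sym_mat A' \<Longrightarrow> (\<And>z. W z = quadratic_field c M u v w z + A' *v (S *v z))
      \<Longrightarrow> inf_invariant \<mu> (Lop A' W) \<longleftrightarrow> (\<forall>z. weighted_div Phi H z = 0)"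
    unfolding mu_def H by (rule inf_invariant_quadratic_drift_iff[OF _ S_sym Phi_def M])
  note sys = weighted_div_quadratic_field_eq_0_iff[OF S_sym Phi(2), of c u v w, folded H,
      unfolded c_def u_def v_def w_def vector_2]
  have "div_mu_zero \<mu> H \<longleftrightarrow> (\<forall>z. weighted_div Phi H z = 0)"
    unfolding div_mu_zero_iff_inf_invariant mu_def H
    by (rule inf_invariant_quadratic_drift_iff[OF sym_mat_0 S_sym Phi_def]) (simp_all add: trace_def)
  moreover have "(\<forall>z. grad Phi z \<bullet> H z + 1/2 * div_field H z = 0) \<longleftrightarrow> (\<forall>z. weighted_div Phi H z = 0)"
    by (rule all_cong1) (auto simp: weighted_div_def)
  moreover have "inf_invariant \<mu> (Lop A P) \<longleftrightarrow> (\<forall>z. weighted_div Phi H z = 0)"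
    by (rule inf_invariant_iff[OF A_sym]) (simp add: P_def drift)
  moreover have "inf_invariant \<mu> (Lop (mat 1) Ptil) \<longleftrightarrow> (\<forall>z. weighted_div Phi H z = 0)"
    by (rule inf_invariant_iff) (simp_all add: Ptil_def P_def drift)
  moreover have "is_SOHHD Phi (\<lambda>z. (G - A ** S) *v z + H z) \<longleftrightarrow> (a20 = - b21 / 2 \<and> b22 = - a21 / 2)"
    if "\<forall>z. weighted_div Phi H z = 0"
  proof -
    have "(\<lambda>z. (G - A ** S) *v z + H z) = quadratic_field c M u v w"
      by (simp add: fun_eq_iff H quadratic_field_def algebra_simps flip: M_def)
    then show ?thesis
      using is_SOHHD_quadratic_field_iff[OF Phi(1) _ M(1), of c u v w] that
        weighted_div_quadratic_field_drop_linear[OF Phi(2) M]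
      by (auto simp: H u_def v_def w_def)
  qed
  moreover have "inf_invariant \<mu> (Lop A (\<lambda>z. G *v z))"
    unfolding mu_def using inf_invariant_linear_drift[OF A_sym S_sym Phi_def M] drift H
    by (simp add: M_def matrix_vector_mult_diff_rdistrib matrix_vector_mul_assoc)
  moreover have "inf_invariant \<mu> (Lop (mat 1) (\<lambda>z. S *v z))"
    unfolding mu_def
    by (rule inf_invariant_linear_drift[OF _ S_sym Phi_def, of _ 0]) (simp_all add: trace_def)
  moreover have "inf_invariant \<mu> (Lop (mat 1) Gtil)"
    unfolding mu_def
    by (rule inf_invariant_linear_drift[OF _ S_sym Phi_def M]) (simp_all add: Gtil_def M_def)
  ultimately show ?thesis
    unfolding Let_def sys by auto
qed

end
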